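(* Let $n$ be a positive integer. Then $\mathsf{D}_{\mathrm{cc}}^\rightarrow(\mathsf{OMB}_n \circ \mathsf{AND}) = \lceil\log(n + 1)\rceil$.
   Context: $\mathsf{OMB}_n:\{0,1\}^n\to\{0,1\}$ is defined by $\mathsf{OMB}_n(x)=1$ if $\max\{i\in[n]:x_i=0\}$ is odd and $0$ otherwise, with $\mathsf{OMB}_n(1^n)=0$. $f\circ\mathsf{AND}$ is the two-party function $(x,y)\mapsto f(x_1\wedge y_1,\dots,x_n\wedge y_n)$ (Alice holds $x$, Bob $y$), and $\mathsf{D}_{\mathrm{cc}}^\rightarrow$ is deterministic one-way communication complexity. Logarithms are base 2. *)

theory Defs
  imports Complex_Main
begin

text \<open>Bit strings of length n are lists of booleans of length n; the i-th bit
  x_i (1-based) is x ! (i - 1). Boolean value True encodes 1.\<close>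

definition OMB :: "bool list \<Rightarrow> bool" where
  "OMB x = (\<exists>i. 1 \<le> i \<and> i \<le> length x \<and> \<not> x ! (i - 1) \<and> odd i \<and>
                 (\<forall>j. i < j \<and> j \<le> length x \<longrightarrow> x ! (j - 1)))"

definition comp_AND :: "(bool list \<Rightarrow> bool) \<Rightarrow> bool list \<Rightarrow> bool list \<Rightarrow> bool" where
  "comp_AND f x y = f (map2 (\<and>) x y)"

definition D_cc_oneway :: "nat \<Rightarrow> (bool list \<Rightarrow> bool list \<Rightarrow> bool) \<Rightarrow> nat" where
  "D_cc_oneway n F = (LEAST c. \<exists>(m :: bool list \<Rightarrow> bool list) (B :: bool list \<Rightarrow> bool list \<Rightarrow> bool).
      (\<forall>x. length x = n \<longrightarrow> length (m x) = c) \<and>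
      (\<forall>x y. length x = n \<longrightarrow> length y = n \<longrightarrow> B (m x) y = F x y))"

end

theory Submission
  imports Defs "HOL-Library.Log_Nat"
begin

text \<open>In a one-way protocol Bob's output is a function of Alice's message and y, so the
  message must determine the row of the communication matrix indexed by x; conversely,
  sending an encoding of that row suffices. Hence the one-way complexity is the ceiling of
  the logarithm of the number of distinct rows. For OMB o AND, the last zero of the
  conjunction of x and y sits at the maximum of the positions of the last zeros of x and y,
  so the row of x depends only on the position k of its last zero, k in {0..n}; and
  different values k < l are separated by a y whose last zero is at position l - 1. So there
  are exactly n + 1 rows.\<close>

definition oneway_protocol :: "nat \<Rightarrow> (bool list \<Rightarrow> bool list \<Rightarrow> bool) \<Rightarrow> nat \<Rightarrow> bool" where
  "oneway_protocol n F c \<longleftrightarrow>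
    (\<exists>(m :: bool list \<Rightarrow> bool list) (B :: bool list \<Rightarrow> bool list \<Rightarrow> bool).
      (\<forall>x. length x = n \<longrightarrow> length (m x) = c) \<and>
      (\<forall>x y. length x = n \<longrightarrow> length y = n \<longrightarrow> B (m x) y = F x y))"

lemma D_cc_oneway_eq_Least: "D_cc_oneway n F = (LEAST c. oneway_protocol n F c)"
  by (simp add: D_cc_oneway_def oneway_protocol_def)

definition row :: "nat \<Rightarrow> (bool list \<Rightarrow> bool list \<Rightarrow> bool) \<Rightarrow> bool list \<Rightarrow> bool list set" where
  "row n F x = {y. length y = n \<and> F x y}"

definition rows :: "nat \<Rightarrow> (bool list \<Rightarrow> bool list \<Rightarrow> bool) \<Rightarrow> bool list set set" where
  "rows n F = row n F ` {x. length x = n}"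

lemma finite_bool_lists: "finite {xs :: bool list. length xs = c}"
  using finite_lists_length_eq[of "UNIV :: bool set" c] by simp

lemma card_bool_lists: "card {xs :: bool list. length xs = c} = 2 ^ c"
  using card_lists_length_eq[of "UNIV :: bool set" c] by simp

lemma finite_rows: "finite (rows n F)"
proof -
  have "rows n F \<subseteq> Pow {y. length y = n}"
    by (auto simp: rows_def row_def)
  then show ?thesis
    by (rule finite_subset) (simp add: finite_bool_lists)
qed

lemma card_rows_pos: "card (rows n F) > 0"
  using finite_rows[of n F]
  by (auto simp: rows_def card_gt_0_iff intro: exI[of _ "replicate n True"])

lemma oneway_protocol_imp_card_rows_le:
  assumes "oneway_protocol n F c"
  shows "card (rows n F) \<le> 2 ^ c"
proof -
  obtain m :: "bool list \<Rightarrow> bool list" and B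
    where m: "\<And>x. length x = n \<Longrightarrow> length (m x) = c"
    and B: "\<And>x y. length x = n \<Longrightarrow> length y = n \<Longrightarrow> B (m x) y = F x y"
    using assms unfolding oneway_protocol_def by blast
  let ?row_of_msg = "\<lambda>msg. {y. length y = n \<and> B msg y}"
  have "row n F x = ?row_of_msg (m x)" if "length x = n" for x
    using B that by (auto simp: row_def)
  then have "rows n F \<subseteq> ?row_of_msg ` {msg. length msg = c}"
    using m by (auto simp: rows_def)
  then have "card (rows n F) \<le> card (?row_of_msg ` {msg. length msg = c})"
    by (intro card_mono finite_imageI finite_bool_lists)
  also have "\<dots> \<le> 2 ^ c"
    using card_image_le[OF finite_bool_lists] by (simp add: card_bool_lists)
  finally show ?thesis .
qed

lemma card_rows_le_imp_oneway_protocol: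
  assumes "card (rows n F) \<le> 2 ^ c"
  shows "oneway_protocol n F c"
proof -
  obtain e :: "bool list set \<Rightarrow> bool list"
    where e: "e ` rows n F \<subseteq> {msg. length msg = c}" "inj_on e (rows n F)"
    using card_le_inj[OF finite_rows finite_bool_lists, of n F c] assms
    by (auto simp: card_bool_lists)
  have row_in: "row n F x \<in> rows n F" if "length x = n" for x
    using that by (simp add: rows_def)
  show ?thesis unfolding oneway_protocol_def
  proof (intro exI[of _ "\<lambda>x. e (row n F x)"] exI[of _ "\<lambda>msg y. y \<in> inv_into (rows n F) e msg"]
      conjI allI impI)
    fix x :: "bool list" assume "length x = n"
    then show "length (e (row n F x)) = c"
      using e(1) row_in by blast
  next
    fix x y :: "bool list" assume "length x = n" "length y = n"
    then show "(y \<in> inv_into (rows n F) e (e (row n F x))) = F x y"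
      using inv_into_f_f[OF e(2) row_in] by (simp add: row_def)
  qed
qed

lemma oneway_protocol_iff_card_rows_le:
  "oneway_protocol n F c \<longleftrightarrow> card (rows n F) \<le> 2 ^ c"
  using oneway_protocol_imp_card_rows_le card_rows_le_imp_oneway_protocol by blast

theorem D_cc_oneway_eq_ceillog2_card_rows: "D_cc_oneway n F = ceillog2 (card (rows n F))"
  unfolding D_cc_oneway_eq_Least oneway_protocol_iff_card_rows_le
  by (rule Least_equality) (simp_all add: le_two_power_ceillog2 ceillog2_le_iff card_rows_pos)

text \<open>The 1-based position of the last False in the list, and 0 if there is none.\<close>

definition last_zero :: "bool list \<Rightarrow> nat" where
  "last_zero xs = length (dropWhile (\<lambda>b. b) (rev xs))"

lemma last_zero_Nil [simp]: "last_zero [] = 0"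
  by (simp add: last_zero_def)

lemma last_zero_snoc [simp]:
  "last_zero (xs @ [b]) = (if b then last_zero xs else Suc (length xs))"
  by (simp add: last_zero_def)

lemma last_zero_le_length: "last_zero xs \<le> length xs"
  by (induction xs rule: rev_induct) auto

lemma last_zero_append_replicate_True: "last_zero (xs @ replicate k True) = last_zero xs"
  using dropWhile_append2[of "replicate k True" "\<lambda>b. b" "rev xs"] by (auto simp: last_zero_def)

lemma last_zero_replicate_False: "last_zero (replicate k False) = k"
  by (simp add: last_zero_def dropWhile_eq_self_iff)

lemma last_zero_map2_conj:
  "length xs = length ys \<Longrightarrow> last_zero (map2 (\<and>) xs ys) = max (last_zero xs) (last_zero ys)"
proof (induction xs arbitrary: ys rule: rev_induct)
  case Nil
  then show ?case by simp
next
  case (snoc a xs)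
  then obtain ys' b where ys: "ys = ys' @ [b]" and "length ys' = length xs"
    by (cases ys rule: rev_cases) auto
  then show ?case
    using snoc.IH[of ys'] last_zero_le_length[of xs] last_zero_le_length[of ys']
    by (auto simp: max_def)
qed

lemma OMB_Nil [simp]: "\<not> OMB []"
  by (simp add: OMB_def)

lemma OMB_snoc: "OMB (xs @ [b]) = (if b then OMB xs else odd (Suc (length xs)))"
  unfolding OMB_def by (cases b) (auto simp: nth_append le_Suc_eq)

lemma OMB_iff_odd_last_zero: "OMB xs \<longleftrightarrow> odd (last_zero xs)"
  by (induction xs rule: rev_induct) (simp_all add: OMB_snoc)

lemma row_comp_AND_OMB:
  "length x = n \<Longrightarrow>
    row n (comp_AND OMB) x = {y. length y = n \<and> odd (max (last_zero x) (last_zero y))}"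
  by (auto simp: row_def comp_AND_def OMB_iff_odd_last_zero last_zero_map2_conj)

lemma card_rows_comp_AND_OMB: "card (rows n (comp_AND OMB)) = n + 1"
proof -
  define R where "R k = {y. length y = n \<and> odd (max k (last_zero y))}" for k
  define unary where "unary k = replicate k False @ replicate (n - k) True" for k
  have last_zero_unary: "last_zero (unary k) = k" "length (unary k) = n" if "k \<le> n" for k
    using that by (simp_all add: unary_def last_zero_append_replicate_True last_zero_replicate_False)
  have "rows n (comp_AND OMB) = R ` {..n}"
  proof
    show "rows n (comp_AND OMB) \<subseteq> R ` {..n}"
      using last_zero_le_length by (auto simp: rows_def R_def row_comp_AND_OMB)
    show "R ` {..n} \<subseteq> rows n (comp_AND OMB)"
      using last_zero_unary by (force simp: rows_def R_def row_comp_AND_OMB)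
  qed
  moreover have "inj_on R {..n}"
  proof (rule linorder_inj_onI')
    fix k l assume "k \<in> {..n}" "l \<in> {..n}" "k < l"
    then have "unary (l - 1) \<in> R l \<longleftrightarrow> unary (l - 1) \<notin> R k"
      using last_zero_unary[of "l - 1"] by (auto simp: R_def max_def)
    then show "R k \<noteq> R l" by blast
  qed
  ultimately show ?thesis
    by (simp add: card_image)
qed

theorem claim4p7:
  fixes n :: nat
  assumes "n \<ge> 1"
  shows "D_cc_oneway n (comp_AND OMB) = nat \<lceil>log 2 (real n + 1)\<rceil>"
  by (simp add: D_cc_oneway_eq_ceillog2_card_rows card_rows_comp_AND_OMB ceillog2_def
      add.commute)

end
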